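(* Let $r, s, m, n$ be positive integers such that $\frac{r+s}{\gcd(r,s)}$ divides $m$. If $f: V(H_{n,m}) \rightarrow \{-r,s\}$ is a function with $f(V(H_{n,m})) = 0$, then $H_{n,m}$ can be decomposed into $n$ vertex-disjoint directed $m$-paths $P_1, \ldots, P_n$ with $f(V(P_i))=0$ for all $1\le i\le n$.
   Context: For a set $Y$ of vertices, $f(Y)=\sum_{y\in Y}f(y)$. $H_{n,m}$ is the directed graph whose vertex set is the disjoint union of $V_1,\dots,V_m$ with $|V_i|=n$, and whose arc set is $\bigcup_{i=1}^{m-1}\{(v,w): v\in V_i, w\in V_{i+1}\}$. A directed $m$-path is a directed path with $m$ vertices. *)

theory Defs
  imports Main
begin

text \<open>The digraph H_{n,m}: vertex (i,j) is the j-th vertex of layer V_{i+1},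
  for i < m (layer index, 0-based) and j < n.\<close>

definition H_verts :: "nat \<Rightarrow> nat \<Rightarrow> (nat \<times> nat) set" where
  "H_verts n m = {0..<m} \<times> {0..<n}"

definition H_arc :: "nat \<Rightarrow> nat \<Rightarrow> (nat \<times> nat) \<Rightarrow> (nat \<times> nat) \<Rightarrow> bool" where
  "H_arc n m v w \<longleftrightarrow> v \<in> H_verts n m \<and> w \<in> H_verts n m \<and> fst w = fst v + 1"

definition H_dipath :: "nat \<Rightarrow> nat \<Rightarrow> nat \<Rightarrow> (nat \<times> nat) list \<Rightarrow> bool" where
  "H_dipath n m k p \<longleftrightarrow> length p = k \<and> distinct p \<and> set p \<subseteq> H_verts n m \<and>
     (\<forall>i. i + 1 < length p \<longrightarrow> H_arc n m (p ! i) (p ! (i + 1)))"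

end

theory Submission
  imports Defs
begin

text \<open>Since the values of f sum to zero, the layers of H_{n,m} contain n A vertices of
  value -r in total, where A = m s / (r + s) is an integer by the divisibility hypothesis.
  A directed m-path takes one vertex from each layer, so it suffices to match every layer
  bijectively with {..<n} such that each of the n resulting transversals meets exactly A
  negative vertices; its f-sum is then m s - (r + s) A = 0. To find the matchings, lay the
  negative counts of the layers out consecutively on a line and send position x to
  transversal x mod n: a layer has at most n negative vertices, so it gives each
  transversal at most one, and a total of n A gives each transversal exactly A.\<close>

lemma eq_if_mod_eq_and_dist_less:
  fixes x y n :: nat
  assumes "x mod n = y mod n" "x < y + n" "y < x + n"
  shows "x = y"
proof (rule ccontr)
  assume "x \<noteq> y"
  have "int x mod int n = int y mod int n"
    using assms(1) by (simp flip: of_nat_mod)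
  then have "int n dvd int x - int y"
    by (simp add: mod_eq_dvd_iff)
  then have "\<bar>int n\<bar> \<le> \<bar>int x - int y\<bar>"
    using \<open>x \<noteq> y\<close> by (intro dvd_imp_le_int) simp_all
  with assms(2,3) show False by linarith
qed

lemma inj_on_mod_atLeastLessThan:
  fixes a c n :: nat
  assumes "c \<le> n"
  shows "inj_on (\<lambda>x. x mod n) {a..<a + c}"
proof (rule inj_onI)
  fix x y assume "x \<in> {a..<a + c}" "y \<in> {a..<a + c}" "x mod n = y mod n"
  then show "x = y"
    using assms by (intro eq_if_mod_eq_and_dist_less[of x n y]) auto
qed

lemma card_residue_class_lessThan:
  fixes n A j :: nat
  assumes "j < n"
  shows "card {x. x < n * A \<and> x mod n = j} = A"
proof -
  have "{x. x < n * A \<and> x mod n = j} = (\<lambda>q. q * n + j) ` {..<A}"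
  proof safe
    fix x assume "x < n * A" "j = x mod n"
    moreover have "x = x div n * n + x mod n" by simp
    moreover have "x div n < A"
      using \<open>x < n * A\<close> by (simp add: less_mult_imp_div_less mult.commute)
    ultimately show "x \<in> (\<lambda>q. q * n + x mod n) ` {..<A}" by blast
  next
    fix q assume "q < A"
    have "q * n + j < (q + 1) * n"
      using assms by simp
    also have "\<dots> \<le> A * n"
      using \<open>q < A\<close> by (intro mult_le_mono1) simp
    finally show "q * n + j < n * A" by (simp add: mult.commute)
    show "(q * n + j) mod n = j" using assms by simp
  qed
  moreover have "inj_on (\<lambda>q. q * n + j) {..<A}"
    using assms by (intro inj_onI) auto
  ultimately show ?thesis by (simp add: card_image)
qed

lemma card_residue_class_atLeastLessThan:
  fixes a c n j :: nat
  assumes "c \<le> n"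
  shows "card {x \<in> {a..<a + c}. x mod n = j} = (if j \<in> (\<lambda>x. x mod n) ` {a..<a + c} then 1 else 0)"
proof (cases "j \<in> (\<lambda>x. x mod n) ` {a..<a + c}")
  case True
  then obtain x0 where x0: "x0 \<in> {a..<a + c}" "x0 mod n = j" by blast
  have "{x \<in> {a..<a + c}. x mod n = j} = {x0}"
    using x0 inj_onD[OF inj_on_mod_atLeastLessThan[OF assms]] by fastforce
  then show ?thesis using True by simp
qed auto

lemma card_blocks_meeting_residue_class:
  fixes c :: "nat \<Rightarrow> nat" and n j m :: nat
  assumes "\<forall>i<m. c i \<le> n"
  shows "card {i. i < m \<and> j \<in> (\<lambda>x. x mod n) ` {(\<Sum>l<i. c l)..<(\<Sum>l<i. c l) + c i}}
       = card {x. x < (\<Sum>i<m. c i) \<and> x mod n = j}"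
  using assms
proof (induction m)
  case (Suc m)
  let ?o = "\<Sum>l<m. c l"
  let ?B = "\<lambda>i. (\<lambda>x. x mod n) ` {(\<Sum>l<i. c l)..<(\<Sum>l<i. c l) + c i}"
  have "{i. i < Suc m \<and> j \<in> ?B i} = {i. i < m \<and> j \<in> ?B i} \<union> (if j \<in> ?B m then {m} else {})"
    by (auto simp: less_Suc_eq)
  then have "card {i. i < Suc m \<and> j \<in> ?B i} = card {i. i < m \<and> j \<in> ?B i} + (if j \<in> ?B m then 1 else 0)"
    by simp
  also have "\<dots> = card {x. x < ?o \<and> x mod n = j} + card {x \<in> {?o..<?o + c m}. x mod n = j}"
    using Suc card_residue_class_atLeastLessThan[of "c m" n ?o j] by simp
  also have "\<dots> = card {x. x < ?o + c m \<and> x mod n = j}"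
    by (subst card_Un_disjoint[symmetric]) (auto intro: arg_cong[where f = card])
  finally show ?case by simp
qed simp

lemma dvd_mult_if_div_dvd:
  fixes a g m b :: "'a::algebraic_semidom"
  assumes "a div g dvd m" "g dvd a" "g dvd b"
  shows "a dvd m * b"
proof -
  have "a div g * g dvd m * b"
    using assms(1,3) by (rule mult_dvd_mono)
  then show ?thesis
    by (simp only: dvd_div_mult_self[OF assms(2)])
qed

lemma sum_two_valued:
  fixes f :: "'a \<Rightarrow> 'b::comm_ring_1"
  assumes "finite S" "\<forall>v\<in>S. f v = a \<or> f v = b"
  shows "sum f S = of_nat (card S) * b + of_nat (card {v\<in>S. f v = a}) * (a - b)"
proof -
  have "sum f S = (\<Sum>v\<in>S. b + (if f v = a then a - b else 0))"
    using assms(2) by (intro sum.cong) auto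
  also have "\<dots> = of_nat (card S) * b + of_nat (card {v\<in>S. f v = a}) * (a - b)"
    using assms(1) by (simp add: sum.distrib sum.If_cases Int_def mult.commute)
  finally show ?thesis .
qed

lemma exists_permutation_with_preimage:
  assumes "finite U" "A \<subseteq> U" "B \<subseteq> U" "card A = card B"
  shows "\<exists>\<sigma>. bij_betw \<sigma> U U \<and> (\<forall>x\<in>U. \<sigma> x \<in> B \<longleftrightarrow> x \<in> A)"
proof -
  have "finite A" "finite B"
    using assms finite_subset by auto
  then have "card (U - A) = card (U - B)"
    using assms by (simp add: card_Diff_subset)
  moreover obtain g where g: "bij_betw g A B"
    using finite_same_card_bij \<open>finite A\<close> \<open>finite B\<close> assms(4) by blast
  ultimately obtain h where h: "bij_betw h (U - A) (U - B)"
    using finite_same_card_bij assms(1) by (meson finite_Diff)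
  define \<sigma> where "\<sigma> x = (if x \<in> A then g x else h x)" for x
  have "bij_betw \<sigma> A B" "bij_betw \<sigma> (U - A) (U - B)"
    using g h by (auto simp: \<sigma>_def intro: bij_betw_cong[THEN iffD1, rotated])
  moreover have "bij_betw \<sigma> (A \<union> (U - A)) (B \<union> (U - B))"
    using calculation by (rule bij_betw_combine) auto
  moreover have "A \<union> (U - A) = U" "B \<union> (U - B) = U"
    using assms by auto
  ultimately show ?thesis
    by (metis Diff_iff bij_betwE)
qed

lemma exists_permutations_equidistributing:
  fixes S :: "nat \<Rightarrow> nat set"
  assumes "0 < n" "\<forall>i<m. S i \<subseteq> {..<n}" "(\<Sum>i<m. card (S i)) = n * A"
  shows "\<exists>\<sigma>. (\<forall>i<m. bij_betw (\<sigma> i) {..<n} {..<n}) \<and> (\<forall>j<n. card {i. i < m \<and> \<sigma> i j \<in> S i} = A)"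
proof -
  define B where "B i = (\<lambda>x. x mod n) ` {(\<Sum>l<i. card (S l))..<(\<Sum>l<i. card (S l)) + card (S i)}" for i
  have small: "\<forall>i<m. card (S i) \<le> n"
    using assms(2) by (metis card_lessThan card_mono finite_lessThan)
  have "\<exists>\<tau>. bij_betw \<tau> {..<n} {..<n} \<and> (\<forall>x\<in>{..<n}. \<tau> x \<in> S i \<longleftrightarrow> x \<in> B i)" if "i < m" for i
  proof (rule exists_permutation_with_preimage)
    show "B i \<subseteq> {..<n}" using assms(1) by (auto simp: B_def)
    show "card (B i) = card (S i)"
      using small that by (simp add: B_def card_image inj_on_mod_atLeastLessThan)
  qed (use assms(2) that in auto)
  then obtain \<sigma> where \<sigma>: "\<forall>i<m. bij_betw (\<sigma> i) {..<n} {..<n} \<and> (\<forall>x\<in>{..<n}. \<sigma> i x \<in> S i \<longleftrightarrow> x \<in> B i)"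
    by metis
  have "card {i. i < m \<and> \<sigma> i j \<in> S i} = A" if "j < n" for j
  proof -
    have "{i. i < m \<and> \<sigma> i j \<in> S i} = {i. i < m \<and> j \<in> B i}"
      using \<sigma> that by auto
    then show ?thesis
      using card_blocks_meeting_residue_class[OF small, of j] card_residue_class_lessThan[OF that]
      by (simp add: B_def assms(3))
  qed
  then show ?thesis using \<sigma> by blast
qed

lemma sum_H_verts_two_valued:
  fixes f :: "nat \<times> nat \<Rightarrow> int"
  assumes "\<forall>v\<in>H_verts n m. f v = - int r \<or> f v = int s"
  shows "(\<Sum>v\<in>H_verts n m. f v)
       = int (m * n * s) - int (r + s) * int (\<Sum>i<m. card {j\<in>{..<n}. f (i, j) = - int r})"
proof -
  have layer: "(\<Sum>j<n. f (i, j)) = int (n * s) - int (r + s) * int (card {j\<in>{..<n}. f (i, j) = - int r})"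
    if "i < m" for i
    using sum_two_valued[of "{..<n}" "\<lambda>j. f (i, j)" "- int r" "int s"] assms that
    by (simp add: H_verts_def algebra_simps)
  have "(\<Sum>v\<in>H_verts n m. f v) = (\<Sum>i<m. \<Sum>j<n. f (i, j))"
    by (simp add: H_verts_def sum.cartesian_product atLeast0LessThan)
  also have "\<dots> = (\<Sum>i<m. int (n * s) - int (r + s) * int (card {j\<in>{..<n}. f (i, j) = - int r}))"
    using layer by simp
  finally show ?thesis
    by (simp add: sum_subtractf sum_distrib_left)
qed

definition transversal_path :: "(nat \<Rightarrow> nat \<Rightarrow> nat) \<Rightarrow> nat \<Rightarrow> nat \<Rightarrow> (nat \<times> nat) list" where
  "transversal_path \<sigma> m j = map (\<lambda>i. (i, \<sigma> i j)) [0..<m]"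

lemma set_transversal_path: "set (transversal_path \<sigma> m j) = (\<lambda>i. (i, \<sigma> i j)) ` {..<m}"
  by (auto simp: transversal_path_def)

lemma sum_transversal_path: "(\<Sum>v\<in>set (transversal_path \<sigma> m j). f v) = (\<Sum>i<m. f (i, \<sigma> i j))"
  by (simp add: set_transversal_path sum.reindex inj_on_def)

context
  fixes \<sigma> :: "nat \<Rightarrow> nat \<Rightarrow> nat" and m n :: nat
  assumes perm: "\<forall>i<m. bij_betw (\<sigma> i) {..<n} {..<n}"
begin

lemma H_dipath_transversal_path:
  assumes "j < n"
  shows "H_dipath n m m (transversal_path \<sigma> m j)"
proof -
  have "\<sigma> i j < n" if "i < m" for i
    using perm assms that bij_betwE by blast
  then show ?thesis
    by (auto simp: H_dipath_def H_arc_def H_verts_def transversal_path_def distinct_map inj_on_def)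
qed

lemma transversal_paths_disjoint:
  assumes "j < n" "j' < n" "j \<noteq> j'"
  shows "set (transversal_path \<sigma> m j) \<inter> set (transversal_path \<sigma> m j') = {}"
  using perm assms by (auto simp: set_transversal_path bij_betw_def inj_on_def)

lemma transversal_paths_cover: "(\<Union>j<n. set (transversal_path \<sigma> m j)) = H_verts n m"
proof
  show "(\<Union>j<n. set (transversal_path \<sigma> m j)) \<subseteq> H_verts n m"
    using perm bij_betwE by (fastforce simp: set_transversal_path H_verts_def)
  show "H_verts n m \<subseteq> (\<Union>j<n. set (transversal_path \<sigma> m j))"
  proof
    fix v assume "v \<in> H_verts n m"
    then obtain i y where v: "v = (i, y)" "i < m" "y < n" by (auto simp: H_verts_def)
    have "y \<in> \<sigma> i ` {..<n}"
      using perm v by (simp add: bij_betw_def)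
    then obtain j where "j < n" "\<sigma> i j = y"
      by auto
    then show "v \<in> (\<Union>j<n. set (transversal_path \<sigma> m j))"
      using v by (force simp: set_transversal_path)
  qed
qed

end

theorem corollary4p4:
  fixes r s m n :: nat and f :: "nat \<times> nat \<Rightarrow> int"
  assumes "r > 0" "s > 0" "m > 0" "n > 0"
    and "((r + s) div gcd r s) dvd m"
    and "\<forall>v \<in> H_verts n m. f v = - int r \<or> f v = int s"
    and "(\<Sum>v \<in> H_verts n m. f v) = 0"
  shows "\<exists>P :: nat \<Rightarrow> (nat \<times> nat) list.
           (\<forall>i < n. H_dipath n m m (P i)) \<and>
           (\<forall>i < n. \<forall>j < n. i \<noteq> j \<longrightarrow> set (P i) \<inter> set (P j) = {}) \<and>
           (\<Union>i < n. set (P i)) = H_verts n m \<and>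
           (\<forall>i < n. (\<Sum>v \<in> set (P i). f v) = 0)"
proof -
  define Neg where "Neg i = {j\<in>{..<n}. f (i, j) = - int r}" for i
  obtain A where A: "m * s = (r + s) * A"
    using dvd_mult_if_div_dvd[OF assms(5)] by (metis dvd_def gcd_add1 gcd_dvd1 gcd_dvd2)
  have "int ((r + s) * (\<Sum>i<m. card (Neg i))) = int (m * n * s)"
    using sum_H_verts_two_valued[OF assms(6)] assms(7) by (simp add: Neg_def)
  then have "(r + s) * (\<Sum>i<m. card (Neg i)) = (r + s) * (n * A)"
    using A by (simp only: of_nat_eq_iff) (simp add: ac_simps)
  then have "(\<Sum>i<m. card (Neg i)) = n * A"
    using assms(1) by simp
  moreover have "\<forall>i<m. Neg i \<subseteq> {..<n}"
    by (auto simp: Neg_def)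
  ultimately obtain \<sigma> where \<sigma>: "\<forall>i<m. bij_betw (\<sigma> i) {..<n} {..<n}"
    and balanced: "\<forall>j<n. card {i. i < m \<and> \<sigma> i j \<in> Neg i} = A"
    using exists_permutations_equidistributing[OF assms(4)] by blast
  have "(\<Sum>v\<in>set (transversal_path \<sigma> m j). f v) = 0" if "j < n" for j
  proof -
    have in_layer: "\<sigma> i j < n" if "i < m" for i
      using \<sigma> \<open>j < n\<close> that bij_betwE by blast
    then have "\<forall>i\<in>{..<m}. f (i, \<sigma> i j) = - int r \<or> f (i, \<sigma> i j) = int s"
      using assms(6) by (simp add: H_verts_def)
    moreover have "{i\<in>{..<m}. f (i, \<sigma> i j) = - int r} = {i. i < m \<and> \<sigma> i j \<in> Neg i}"
      using in_layer by (auto simp: Neg_def)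
    ultimately have "(\<Sum>i<m. f (i, \<sigma> i j)) = int (m * s) - int (r + s) * int A"
      using sum_two_valued[of "{..<m}" "\<lambda>i. f (i, \<sigma> i j)" "- int r" "int s"] balanced \<open>j < n\<close>
      by (simp add: algebra_simps)
    then show ?thesis
      using A by (simp add: sum_transversal_path)
  qed
  then show ?thesis
    using H_dipath_transversal_path[OF \<sigma>] transversal_paths_disjoint[OF \<sigma>]
      transversal_paths_cover[OF \<sigma>]
    by blast
qed

end
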